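(* Let $\Phi\subset\mathbb{C}$ be a symbol constellation with at least two distinct points, let $\sigma^2>0$, and let $M\geq 2$ be a power of $2$. Consider the AVC corresponding to securely precoded OFDM (SP-OFDM), with input alphabet $\Phi$, state (jamming) alphabet $\mathbb{C}$ and output $R = S + e^{j\Theta}J + N$, where $\Theta$ is uniformly distributed on $\{2\pi i/M : i=0,1,\dots,M-1\}$, $N\sim\mathcal{CN}(0,\sigma^2)$, and $\Theta$, $N$ are independent of each other and of $(S,J)$; i.e. its transition density is $W(r\mid s,x)=\frac{1}{M}\sum_{i=0}^{M-1}\frac{1}{\pi\sigma^2}\exp\!\big(-|r-s-x e^{j2\pi i/M}|^2/\sigma^2\big)$. Then there is no auxiliary channel $\pi:\Phi\to\mathbb{C}$ that symmetrizes this AVC (the set of symmetrizing channels is empty); in particular the AVC is not $l$-symmetrizable.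
   Context: Definitions (Csiszár–Narayan). Let $W(r\mid s,x)$ be the conditional density of the channel output $R\in\mathbb{C}$ given input $s\in\Phi$ and state $x\in\mathbb{C}$. An auxiliary channel $\pi:\Phi\to\mathbb{C}$ is a family of probability measures $F_\pi(\cdot\mid s)$ on $\mathbb{C}$, $s\in\Phi$. The AVC is symmetrizable via $\pi$ if for all $s,s'\in\Phi$ and all $r\in\mathbb{C}$, $\int_{\mathbb{C}} W(r\mid s,x)\,dF_\pi(x\mid s')=\int_{\mathbb{C}} W(r\mid s',x)\,dF_\pi(x\mid s)$. The AVC is $l$-symmetrizable (under an average jamming power constraint) if there is such a symmetrizing $\pi$ with $\int_{\mathbb{C}}|x|^2\,dF_\pi(x\mid s)<\infty$ for all $s\in\Phi$. *)

theory Defs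
  imports "HOL-Probability.Probability"
begin

definition sp_ofdm_W :: "nat \<Rightarrow> real \<Rightarrow> complex \<Rightarrow> complex \<Rightarrow> complex \<Rightarrow> real" where
  "sp_ofdm_W M \<sigma>2 r s x =
     (1 / real M) * (\<Sum>i<M. (1 / (pi * \<sigma>2)) *
        exp (- (cmod (r - s - x * cis (2 * pi * real i / real M)))\<^sup>2 / \<sigma>2))"

definition aux_channel :: "complex set \<Rightarrow> (complex \<Rightarrow> complex measure) \<Rightarrow> bool" where
  "aux_channel \<Phi> F \<longleftrightarrow> (\<forall>s\<in>\<Phi>. prob_space (F s) \<and> sets (F s) = sets borel)"

definition symmetrizes :: "(complex \<Rightarrow> complex \<Rightarrow> complex \<Rightarrow> real) \<Rightarrow> complex set
    \<Rightarrow> (complex \<Rightarrow> complex measure) \<Rightarrow> bool" where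
  "symmetrizes W \<Phi> F \<longleftrightarrow>
     (\<forall>s\<in>\<Phi>. \<forall>s'\<in>\<Phi>. \<forall>r. (LINT x|F s'. W r s x) = (LINT x|F s. W r s' x))"

definition l_symmetrizable :: "(complex \<Rightarrow> complex \<Rightarrow> complex \<Rightarrow> real) \<Rightarrow> complex set \<Rightarrow> bool" where
  "l_symmetrizable W \<Phi> \<longleftrightarrow>
     (\<exists>F. aux_channel \<Phi> F \<and> symmetrizes W \<Phi> F \<and>
          (\<forall>s\<in>\<Phi>. (\<integral>\<^sup>+ x. ennreal ((cmod x)\<^sup>2) \<partial>F s) < \<infinity>))"

end

theory Submission
  imports Defs "HOL-Real_Asymp.Real_Asymp"
begin

text \<open>For even \<open>M\<close> the phase set \<open>{e^{j2\<pi>i/M}}\<close> is closed under negation, so the output density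
  \<open>W(\<cdot> | s, x)\<close> is symmetric about \<open>s\<close> whatever the jamming state \<open>x\<close>. Averaging over the states,
  a symmetrizing channel would make \<open>g(r) = \<integral> W(r | a, x) dF(x | b)\<close> symmetric about both \<open>a\<close>
  and \<open>b \<noteq> a\<close>, hence periodic with period \<open>2(b - a)\<close>. Since \<open>g\<close> vanishes at infinity by
  dominated convergence, periodicity forces \<open>g = 0\<close>, contradicting the positivity of \<open>W\<close>.\<close>

lemma sum_lessThan_double:
  fixes f :: "nat \<Rightarrow> 'a::comm_monoid_add"
  shows "sum f {..<k + k} = sum f {..<k} + sum (\<lambda>i. f (i + k)) {..<k}"
proof -
  have "sum f {..<k + k} = sum f {..<k} + sum f {k..<k + k}"
    by (simp add: sum.atLeastLessThan_concat[of 0 k "k + k", symmetric] lessThan_atLeast0)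
  also have "sum f {k..<k + k} = sum (\<lambda>i. f (i + k)) {..<k}"
    using sum.shift_bounds_nat_ivl[of f 0 k k] by (simp add: lessThan_atLeast0)
  finally show ?thesis .
qed

lemma cis_add_half_turn:
  assumes "k > 0"
  shows "cis (2 * pi * real (i + k) / real (k + k)) = - cis (2 * pi * real i / real (k + k))"
proof -
  have "2 * pi * real (i + k) / real (k + k) = 2 * pi * real i / real (k + k) + pi"
    using assms by (simp add: field_simps)
  then show ?thesis by (simp add: cis_mult [symmetric])
qed

lemma sp_ofdm_W_reflect:
  assumes "even M"
  shows "sp_ofdm_W M \<sigma>2 (2 * s - r) s x = sp_ofdm_W M \<sigma>2 r s x"
proof -
  obtain k where M: "M = k + k" using assms by (metis evenE mult_2)
  define f where "f r i = (1 / (pi * \<sigma>2)) *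
      exp (- (cmod (r - s - x * cis (2 * pi * real i / real M)))\<^sup>2 / \<sigma>2)" for r i
  have reflect: "cmod (2 * s - r - s - x * c) = cmod (r - s - x * (- c))" for c
  proof -
    have "2 * s - r - s - x * c = - (r - s - x * (- c))" by (simp add: algebra_simps)
    then show ?thesis by (simp only: norm_minus_cancel)
  qed
  have low: "f (2 * s - r) i = f r (i + k)" and high: "f (2 * s - r) (i + k) = f r i"
    if "i \<in> {..<k}" for i
  proof -
    from that have "k > 0" by simp
    show "f (2 * s - r) i = f r (i + k)"
      unfolding f_def M reflect cis_add_half_turn[OF \<open>k > 0\<close>] ..
    show "f (2 * s - r) (i + k) = f r i"
      unfolding f_def M cis_add_half_turn[OF \<open>k > 0\<close>] reflect minus_minus ..
  qed
  have "sum (f (2 * s - r)) {..<k} = sum (\<lambda>i. f r (i + k)) {..<k}"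
    and "sum (\<lambda>i. f (2 * s - r) (i + k)) {..<k} = sum (f r) {..<k}"
    using low high by (auto intro: sum.cong)
  then have "sum (f (2 * s - r)) {..<M} = sum (\<lambda>i. f r (i + k)) {..<k} + sum (f r) {..<k}"
    unfolding M sum_lessThan_double by simp
  also have "\<dots> = sum (f r) {..<M}"
    unfolding M sum_lessThan_double by simp
  finally show ?thesis
    unfolding sp_ofdm_W_def f_def by simp
qed

lemma sp_ofdm_W_pos:
  assumes "M > 0" "\<sigma>2 > 0"
  shows "sp_ofdm_W M \<sigma>2 r s x > 0"
  unfolding sp_ofdm_W_def using assms by (intro mult_pos_pos sum_pos) auto

lemma sp_ofdm_W_le:
  assumes "M > 0" "\<sigma>2 > 0"
  shows "sp_ofdm_W M \<sigma>2 r s x \<le> 1 / (pi * \<sigma>2)"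
proof -
  have "sp_ofdm_W M \<sigma>2 r s x \<le> (1 / real M) * (\<Sum>i<M. 1 / (pi * \<sigma>2))"
    unfolding sp_ofdm_W_def using assms
    by (intro mult_left_mono sum_mono mult_left_le) auto
  then show ?thesis using assms by simp
qed

lemma sp_ofdm_W_borel_measurable: "sp_ofdm_W M \<sigma>2 r s \<in> borel_measurable borel"
  unfolding sp_ofdm_W_def by measurable

lemma gaussian_along_line_tendsto_zero:
  fixes d a :: complex and \<sigma>2 :: real
  assumes "d \<noteq> 0" "\<sigma>2 > 0"
  shows "(\<lambda>n. exp (- (cmod (of_nat n * d + a))\<^sup>2 / \<sigma>2)) \<longlonglongrightarrow> 0"
proof (rule tendsto_sandwich[OF _ _ tendsto_const])
  have "cmod d > 0" using assms by simp
  then show "(\<lambda>n. exp (- (real n * cmod d - cmod a)\<^sup>2 / \<sigma>2)) \<longlonglongrightarrow> 0"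
    using assms by real_asymp
  obtain N where N: "cmod a \<le> real N * cmod d"
    using reals_Archimedean3[OF \<open>cmod d > 0\<close>] by (meson less_imp_le)
  show "\<forall>\<^sub>F n in sequentially. exp (- (cmod (of_nat n * d + a))\<^sup>2 / \<sigma>2)
      \<le> exp (- (real n * cmod d - cmod a)\<^sup>2 / \<sigma>2)"
  proof (rule eventually_sequentiallyI[of N])
    fix n assume "N \<le> n"
    then have "cmod a \<le> real n * cmod d"
      using N \<open>cmod d > 0\<close> by (smt (verit) mult_right_mono of_nat_le_iff)
    moreover have "real n * cmod d - cmod a \<le> cmod (of_nat n * d + a)"
      using norm_diff_ineq[of "of_nat n * d" a] by (simp add: norm_mult)
    ultimately have "(real n * cmod d - cmod a)\<^sup>2 \<le> (cmod (of_nat n * d + a))\<^sup>2"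
      by (intro power_mono) auto
    then show "exp (- (cmod (of_nat n * d + a))\<^sup>2 / \<sigma>2) \<le> exp (- (real n * cmod d - cmod a)\<^sup>2 / \<sigma>2)"
      using assms by (simp add: divide_right_mono)
  qed
qed simp

lemma sp_ofdm_W_along_line_tendsto_zero:
  assumes "d \<noteq> 0" "\<sigma>2 > 0"
  shows "(\<lambda>n. sp_ofdm_W M \<sigma>2 (of_nat n * d) s x) \<longlonglongrightarrow> 0"
proof -
  have "(\<lambda>n. (1 / real M) * (\<Sum>i<M. (1 / (pi * \<sigma>2)) *
        exp (- (cmod (of_nat n * d + (- s - x * cis (2 * pi * real i / real M))))\<^sup>2 / \<sigma>2)))
        \<longlonglongrightarrow> 0"
    by (intro tendsto_mult_right_zero tendsto_null_sum gaussian_along_line_tendsto_zero assms)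
  then show ?thesis unfolding sp_ofdm_W_def by (simp add: algebra_simps)
qed

lemma periodic_if_symmetric_about_two_points:
  fixes g :: "'a::comm_ring_1 \<Rightarrow> 'b"
  assumes "\<And>r. g (2 * a - r) = g r" "\<And>r. g (2 * b - r) = g r"
  shows "g (of_nat n * (2 * (b - a)) + r) = g r"
proof (induction n arbitrary: r)
  case (Suc n)
  have "g (of_nat (Suc n) * (2 * (b - a)) + r) = g (2 * b - (2 * a - (of_nat n * (2 * (b - a)) + r)))"
    by (simp add: algebra_simps)
  then show ?case using assms Suc by metis
qed simp

context
  fixes M :: nat and \<sigma>2 :: real and N :: "complex measure"
  assumes M: "M > 0" and \<sigma>2: "\<sigma>2 > 0"
    and N: "prob_space N" "sets N = sets borel"
begin

interpretation prob_space N by (fact N(1))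

lemma sp_ofdm_W_measurable: "sp_ofdm_W M \<sigma>2 r s \<in> borel_measurable N"
  by (subst measurable_cong_sets[OF N(2) refl]) (rule sp_ofdm_W_borel_measurable)

lemma sp_ofdm_W_norm_bound: "AE x in N. norm (sp_ofdm_W M \<sigma>2 r s x) \<le> 1 / (pi * \<sigma>2)"
  using sp_ofdm_W_le[OF M \<sigma>2] sp_ofdm_W_pos[OF M \<sigma>2] by (simp add: less_imp_le)

lemma integrable_sp_ofdm_W: "integrable N (sp_ofdm_W M \<sigma>2 r s)"
  using integrable_const_bound[OF sp_ofdm_W_norm_bound sp_ofdm_W_measurable] .

lemma integral_sp_ofdm_W_pos: "(LINT x|N. sp_ofdm_W M \<sigma>2 r s x) > 0"
proof -
  have nonneg: "AE x in N. 0 \<le> sp_ofdm_W M \<sigma>2 r s x"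
    using sp_ofdm_W_pos[OF M \<sigma>2] by (simp add: less_imp_le)
  have "\<not> (AE x in N. sp_ofdm_W M \<sigma>2 r s x = 0)"
  proof
    assume "AE x in N. sp_ofdm_W M \<sigma>2 r s x = 0"
    then have "AE x in N. False"
      using sp_ofdm_W_pos[OF M \<sigma>2, of r s] by (simp add: less_le)
    then show False by (simp add: AE_False)
  qed
  then show ?thesis
    using integral_nonneg_eq_0_iff_AE[OF integrable_sp_ofdm_W nonneg] integral_nonneg_AE[OF nonneg]
    by linarith
qed

lemma integral_sp_ofdm_W_along_line_tendsto_zero:
  assumes "d \<noteq> 0"
  shows "(\<lambda>n. LINT x|N. sp_ofdm_W M \<sigma>2 (of_nat n * d) s x) \<longlonglongrightarrow> 0"
proof -
  have "(\<lambda>n. LINT x|N. sp_ofdm_W M \<sigma>2 (of_nat n * d) s x) \<longlonglongrightarrow> (LINT x|N. 0)"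
    using sp_ofdm_W_along_line_tendsto_zero[OF assms \<sigma>2]
    by (intro integral_dominated_convergence[OF borel_measurable_const sp_ofdm_W_measurable
        integrable_const _ sp_ofdm_W_norm_bound]) simp
  then show ?thesis by simp
qed

end

lemma sp_ofdm_W_not_symmetrizable:
  assumes "even M" "M > 0" "\<sigma>2 > 0"
    and F: "aux_channel \<Phi> F" and "a \<in> \<Phi>" "b \<in> \<Phi>" "a \<noteq> b"
  shows "\<not> symmetrizes (sp_ofdm_W M \<sigma>2) \<Phi> F"
proof
  assume sym: "symmetrizes (sp_ofdm_W M \<sigma>2) \<Phi> F"
  define g where "g r = (LINT x|F b. sp_ofdm_W M \<sigma>2 r a x)" for r
  have g_eq: "g r = (LINT x|F a. sp_ofdm_W M \<sigma>2 r b x)" for r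
    using sym \<open>a \<in> \<Phi>\<close> \<open>b \<in> \<Phi>\<close> unfolding symmetrizes_def g_def by blast
  have "g (2 * a - r) = g r" for r
    unfolding g_def by (intro Bochner_Integration.integral_cong refl sp_ofdm_W_reflect \<open>even M\<close>)
  moreover have "g (2 * b - r) = g r" for r
    unfolding g_eq by (intro Bochner_Integration.integral_cong refl sp_ofdm_W_reflect \<open>even M\<close>)
  ultimately have periodic: "g (of_nat n * (2 * (b - a))) = g 0" for n
    using periodic_if_symmetric_about_two_points[of g a b n 0] by simp
  have Fb: "prob_space (F b)" "sets (F b) = sets borel"
    using F \<open>b \<in> \<Phi>\<close> unfolding aux_channel_def by auto
  note integral_lemmas = integral_sp_ofdm_W_pos[OF \<open>M > 0\<close> \<open>\<sigma>2 > 0\<close> Fb]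
    integral_sp_ofdm_W_along_line_tendsto_zero[OF \<open>M > 0\<close> \<open>\<sigma>2 > 0\<close> Fb]
  have "(\<lambda>n. g (of_nat n * (2 * (b - a)))) \<longlonglongrightarrow> 0"
    unfolding g_def using \<open>a \<noteq> b\<close> by (intro integral_lemmas(2)) simp
  then have "g 0 = 0"
    unfolding periodic by (simp add: LIMSEQ_const_iff)
  moreover have "g 0 > 0"
    unfolding g_def by (rule integral_lemmas(1))
  ultimately show False by simp
qed

theorem theorem2:
  fixes \<Phi> :: "complex set" and \<sigma>2 :: real and M :: nat
  assumes "finite \<Phi>" and "\<exists>a\<in>\<Phi>. \<exists>b\<in>\<Phi>. a \<noteq> b"
    and "\<sigma>2 > 0"
    and "M \<ge> 2" and "\<exists>k. M = 2 ^ k"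
  shows "{F. aux_channel \<Phi> F \<and> symmetrizes (sp_ofdm_W M \<sigma>2) \<Phi> F} = {}
         \<and> \<not> l_symmetrizable (sp_ofdm_W M \<sigma>2) \<Phi>"
proof -
  obtain k where "M = 2 ^ k" using assms(5) by blast
  with \<open>M \<ge> 2\<close> have "even M" by (cases k) auto
  obtain a b where "a \<in> \<Phi>" "b \<in> \<Phi>" "a \<noteq> b" using assms(2) by blast
  then have "\<not> (aux_channel \<Phi> F \<and> symmetrizes (sp_ofdm_W M \<sigma>2) \<Phi> F)" for F
    using sp_ofdm_W_not_symmetrizable[OF \<open>even M\<close> _ \<open>\<sigma>2 > 0\<close>] \<open>M \<ge> 2\<close> by auto
  then show ?thesis
    unfolding l_symmetrizable_def by auto
qed

end
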